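(* Let $(\eta_k)_{k\in\mathbb N}$ be i.i.d. real random variables with $\mathbb{E}\eta_1=0$ and $\mathbb{E}\eta_1^2=1$, and let $\alpha>-1/2$. Fix $\gamma\in(0,(\sqrt5-1)/2)$, pick $\rho=\rho(\gamma)>0$ such that $$(1-\gamma)(1+\gamma)^2\big(2-\exp(4(1+\gamma)\rho c_\alpha^{-1/2})\big)>1,$$ and put $s_n=\exp(-n^{1-\gamma})$ for $n\in\mathbb N$. Then $$\limsup_{n\to\infty}f_\alpha(s_n)\sum_{k\ge M(s_n)+1}\frac{(\log k)^\alpha\,\tilde\eta_{k,\rho}(s_n)}{k^{1/2+s_n}}\le1+\gamma\quad\text{a.s.}$$
   Context: $M(s)=\lfloor 1/s\rfloor$ for $s>0$; $c_\alpha=\Gamma(1+2\alpha)/2^{2\alpha}$; $f_\alpha(s)=\big(s^{1+2\alpha}/(c_\alpha\log\log(1/s))\big)^{1/2}$ for $s\in(0,1/e)$. For $k\in\mathbb N$, $\rho>0$, $s\in(0,1/e)$, $\mathcal{A}_{k,\rho}(s)$ is the event $\Big\{|\eta_k|>\frac{\rho}{(\log k)^\alpha\log(1/s)}\Big(\frac{k^{1+s}}{s^{1+2\alpha}\log\log(1/s)}\Big)^{1/2}\Big\}$, $\mathcal{A}^c_{k,\rho}(s)$ its complement, and $\tilde\eta_{k,\rho}(s)=\eta_k\mathbf{1}_{\mathcal{A}^c_{k,\rho}(s)}-\mathbb{E}\big(\eta_k\mathbf{1}_{\mathcal{A}^c_{k,\rho}(s)}\big)$. *)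

theory Defs
  imports "HOL-Probability.Probability"
begin

definition M_fun :: "real \<Rightarrow> nat" where
  "M_fun s = nat \<lfloor>1 / s\<rfloor>"

definition c_alpha :: "real \<Rightarrow> real" where
  "c_alpha \<alpha> = Gamma (1 + 2 * \<alpha>) / 2 powr (2 * \<alpha>)"

definition f_alpha :: "real \<Rightarrow> real \<Rightarrow> real" where
  "f_alpha \<alpha> s = sqrt (s powr (1 + 2 * \<alpha>) / (c_alpha \<alpha> * ln (ln (1 / s))))"

text \<open>Threshold of the event A_{k,rho}(s): A = {|eta_k| > thr}.\<close>
definition thr :: "real \<Rightarrow> nat \<Rightarrow> real \<Rightarrow> real \<Rightarrow> real" where
  "thr \<alpha> k \<rho> s = \<rho> / ((ln (real k)) powr \<alpha> * ln (1 / s))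
      * sqrt (real k powr (1 + s) / (s powr (1 + 2 * \<alpha>) * ln (ln (1 / s))))"

definition eta_trunc :: "(nat \<Rightarrow> 'a \<Rightarrow> real) \<Rightarrow> real \<Rightarrow> nat \<Rightarrow> real \<Rightarrow> real \<Rightarrow> 'a \<Rightarrow> real" where
  "eta_trunc \<eta> \<alpha> k \<rho> s \<omega> = (if \<bar>\<eta> k \<omega>\<bar> \<le> thr \<alpha> k \<rho> s then \<eta> k \<omega> else 0)"

definition eta_tilde :: "'a measure \<Rightarrow> (nat \<Rightarrow> 'a \<Rightarrow> real) \<Rightarrow> real \<Rightarrow> nat \<Rightarrow> real \<Rightarrow> real \<Rightarrow> 'a \<Rightarrow> real" where
  "eta_tilde M \<eta> \<alpha> k \<rho> s \<omega> =
     eta_trunc \<eta> \<alpha> k \<rho> s \<omega> - integral\<^sup>L M (eta_trunc \<eta> \<alpha> k \<rho> s)"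

definition s_seq :: "real \<Rightarrow> nat \<Rightarrow> real" where
  "s_seq \<gamma> n = exp (- (real n powr (1 - \<gamma>)))"

text \<open>The j-th term (j = 0,1,...) of the series over k >= M(s)+1, k = j + M(s) + 1.\<close>
definition series_term :: "'a measure \<Rightarrow> (nat \<Rightarrow> 'a \<Rightarrow> real) \<Rightarrow> real \<Rightarrow> real \<Rightarrow> real \<Rightarrow> 'a \<Rightarrow> nat \<Rightarrow> real" where
  "series_term M \<eta> \<alpha> \<rho> s \<omega> j =
     (let k = j + M_fun s + 1 in
       (ln (real k)) powr \<alpha> * eta_tilde M \<eta> \<alpha> k \<rho> s \<omega> / real k powr (1/2 + s))"

end

theory Submission
  imports Defs
begin

text \<open>Truncating \<eta>_k at the threshold of the events A_{k,\<rho>}(s) makes the centred summands bounded by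
  a constant of order 1 / (log(1/s) sqrt(s^(1+2\<alpha>) log log(1/s))), with variances at most
  (log k)^(2\<alpha>) k^(-1-2s); comparison with a Gamma integral bounds the sum of the variances by
  c_\<alpha> / (2 s^(1+2\<alpha>)). Kolmogorov's convergence criterion makes each series converge almost
  surely. A Bernstein-type exponential bound, with the Chernoff parameter matched to this variance
  bound, gives P(f_\<alpha>(s_n) \<Sum> > 1 + \<gamma>) \<le> exp(-(1 + \<gamma>)^2 log log(1/s_n) / e^D) = n^(-p), and the
  assumption on \<rho> makes p > 1, so Borel--Cantelli over n concludes.\<close>

section \<open>Elementary analysis\<close>

lemma exp_le_quadratic:
  fixes y D :: real
  assumes "\<bar>y\<bar> \<le> D"
  shows "exp y \<le> 1 + y + y\<^sup>2 / 2 * exp D"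
proof -
  obtain t where t: "\<bar>t\<bar> \<le> \<bar>y\<bar>" "exp y = (\<Sum>m<2. y ^ m / fact m) + exp t / fact 2 * y ^ 2"
    using Maclaurin_exp_le[of y 2] by blast
  have "exp t \<le> exp D" using t(1) assms by simp
  then have "exp t / fact 2 * y ^ 2 \<le> y\<^sup>2 / 2 * exp D"
    by (simp add: fact_numeral mult_right_mono algebra_simps)
  moreover have "(\<Sum>m<2. y ^ m / fact m) = 1 + y" by (simp add: numeral_2_eq_2)
  ultimately show ?thesis using t(2) by linarith
qed

lemma less_if_mult_two_minus_gt_one:
  fixes q E :: real
  assumes "q * (2 - E) > 1" and "q > 0"
  shows "E < q"
proof -
  have "2 - E > 0" using assms by (smt (verit) mult_nonneg_nonpos)
  moreover have "E * (2 - E) \<le> 1"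
    using zero_le_power2[of "E - 1"] by (simp add: power2_eq_square algebra_simps)
  ultimately show ?thesis using assms(1) by (smt (verit) mult_right_mono)
qed

lemma eventually_le_real_powr:
  fixes e K :: real
  assumes "e > 0"
  shows "eventually (\<lambda>n. K \<le> real n powr e) sequentially"
proof -
  define K' where "K' = max K 1"
  have "K' \<le> real n powr e" if "real n \<ge> K' powr (1 / e)" for n
  proof -
    have "K' = (K' powr (1 / e)) powr e" using assms by (simp add: K'_def powr_powr)
    also have "\<dots> \<le> real n powr e" using that assms by (intro powr_mono2) auto
    finally show ?thesis .
  qed
  moreover have "eventually (\<lambda>n. real n \<ge> K' powr (1 / e)) sequentially"
    using eventually_ge_at_top[of "nat \<lceil>K' powr (1 / e)\<rceil>"] by eventually_elim linarith
  ultimately show ?thesis by (auto elim!: eventually_mono simp: K'_def)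
qed

lemma sum_shift_lessThan:
  fixes x :: "nat \<Rightarrow> 'a::comm_monoid_add"
  shows "sum x {m..<m + k} = (\<Sum>i<k. x (i + m))"
  using sum.shift_bounds_nat_ivl[of x 0 m k] by (simp add: atLeast0LessThan add.commute)

lemma summable_if_tail_sums_small:
  fixes x :: "nat \<Rightarrow> real"
  assumes small: "\<And>e. e > 0 \<Longrightarrow> \<exists>m. \<forall>k. \<bar>\<Sum>i<k. x (i + m)\<bar> < e"
  shows "summable x"
  unfolding summable_Cauchy
proof (intro allI impI)
  fix e :: real assume "e > 0"
  then obtain m where m: "\<And>k. \<bar>\<Sum>i<k. x (i + m)\<bar> < e / 2" using small[of "e / 2"] by auto
  have "norm (sum x {a..<b}) < e" if "m \<le> a" for a b
  proof (cases "a \<le> b")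
    case True
    then have "sum x {a..<b} = sum x {m..<m + (b - m)} - sum x {m..<m + (a - m)}"
      using that sum_diff_nat_ivl[of m a b x] by simp
    then have "norm (sum x {a..<b}) \<le> \<bar>\<Sum>i<b - m. x (i + m)\<bar> + \<bar>\<Sum>i<a - m. x (i + m)\<bar>"
      by (simp add: sum_shift_lessThan abs_triangle_ineq4)
    then show ?thesis using m[of "b - m"] m[of "a - m"] by simp
  qed (use \<open>e > 0\<close> in simp)
  then show "\<exists>N. \<forall>a\<ge>N. \<forall>b. norm (sum x {a..<b}) < e" by blast
qed

lemma sum_restrict_lessThan:
  fixes j k :: nat
  shows "j \<le> k \<Longrightarrow> (\<Sum>i<j. restrict g {..<k} i) = (\<Sum>i<j. g i)"
  by (rule sum.cong) auto

lemma powr_mult_exp_decreasing: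
  fixes \<beta> c u v :: real
  assumes c: "c \<ge> 0" and u: "u > 0" "\<beta> \<le> c * u" and uv: "u \<le> v"
  shows "v powr \<beta> * exp (- (c * v)) \<le> u powr \<beta> * exp (- (c * u))"
proof (rule DERIV_nonpos_imp_nonincreasing[OF uv])
  fix x assume x: "u \<le> x" "x \<le> v"
  then have x0: "x > 0" using u by auto
  have "((\<lambda>u. u powr \<beta> * exp (- (c * u))) has_real_derivative
      \<beta> * x powr (\<beta> - 1) * exp (- (c * x)) + x powr \<beta> * (exp (- (c * x)) * (- c))) (at x)"
    using x0 by (intro derivative_eq_intros has_real_derivative_powr) auto
  moreover have "x powr \<beta> = x powr (\<beta> - 1) * x" using x0 by (simp add: powr_diff)
  then have "\<beta> * x powr (\<beta> - 1) * exp (- (c * x)) + x powr \<beta> * (exp (- (c * x)) * (- c))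
      = x powr (\<beta> - 1) * exp (- (c * x)) * (\<beta> - c * x)"
    by (simp add: algebra_simps)
  moreover have "\<beta> - c * x \<le> 0" using u x mult_left_mono[of u x c] c by linarith
  ultimately show "\<exists>y. ((\<lambda>u. u powr \<beta> * exp (- (c * u))) has_real_derivative y) (at x) \<and> y \<le> 0"
    by (intro exI conjI) (auto intro: mult_nonneg_nonpos)
qed

lemma integral_powr_exp_le_Gamma:
  fixes \<beta> c lo hi :: real
  assumes \<beta>: "\<beta> > -1" and c: "c > 0" and lo: "0 < lo" and hi: "lo \<le> hi"
  shows "integral {lo..hi} (\<lambda>u. u powr \<beta> * exp (- (c * u))) \<le> Gamma (\<beta> + 1) / c powr (\<beta> + 1)"
proof -
  define F where "F t = t powr \<beta> / exp t" for t :: real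
  have Gamma: "(F has_integral Gamma (\<beta> + 1)) {0..}"
    unfolding F_def using Gamma_integral_real[of "\<beta> + 1"] \<beta> by simp
  have "F integrable_on {c * lo..c * hi}"
    unfolding F_def using c lo
    by (intro integrable_continuous_interval continuous_intros) (auto simp: mult_le_0_iff)
  then obtain I where I: "(F has_integral I) {c * lo..c * hi}" by blast
  have I_le: "I \<le> Gamma (\<beta> + 1)"
    using c lo by (intro has_integral_subset_le[OF _ I Gamma]) (auto simp: F_def)
  have "((\<lambda>u. F (c * u)) has_integral (I / c)) {lo..hi}"
    using has_integral_affinity'[of F I "c * lo" "c * hi" c 0] I c
    by (simp add: cbox_interval field_simps)
  moreover have "u powr \<beta> * exp (- (c * u)) = c powr (- \<beta>) * F (c * u)" if "u \<in> {lo..hi}" for u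
    using that lo c by (simp add: F_def powr_mult powr_minus exp_minus field_simps)
  ultimately have "integral {lo..hi} (\<lambda>u. u powr \<beta> * exp (- (c * u))) = c powr (- \<beta>) * (I / c)"
    by (intro integral_unique has_integral_eq[OF _ has_integral_mult_right]) auto
  also have "\<dots> \<le> c powr (- \<beta>) * (Gamma (\<beta> + 1) / c)"
    using I_le c by (intro mult_left_mono divide_right_mono) auto
  also have "\<dots> = Gamma (\<beta> + 1) / c powr (\<beta> + 1)"
    using c by (simp add: powr_add powr_minus field_simps)
  finally show ?thesis .
qed

lemma log_powr_div_powr_le_integral:
  fixes \<beta> c :: real and k :: nat
  assumes c: "c \<ge> 0" and k: "real k > 2" and \<beta>: "\<beta> \<le> ln (real k - 1)"
  shows "ln (real k) powr \<beta> / real k powr (1 + c)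
          \<le> integral {ln (real k - 1)..ln (real k)} (\<lambda>u. u powr \<beta> * exp (- (c * u)))"
proof -
  define a b where "a = ln (real k - 1)" and "b = ln (real k)"
  define g where "g = ln (real k) powr \<beta> / real k powr (1 + c)"
  have k1: "real k - 1 > 1" using k by simp
  have a0: "a > 0" and ab: "a \<le> b" unfolding a_def b_def using k1 by simp_all
  have g_eq: "g = b powr \<beta> * exp (- ((1 + c) * b))"
  proof -
    have "real k powr (1 + c) = exp ((1 + c) * b)" unfolding b_def using k1 by (simp add: powr_def)
    then show ?thesis
      unfolding g_def b_def by (simp add: exp_minus[of "(1 + c) * _"] divide_inverse)
  qed
  have "((\<lambda>u. g * exp u) has_integral (g * exp b - g * exp a)) {a..b}"
    using ab by (intro fundamental_theorem_of_calculus)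
      (auto intro!: derivative_eq_intros
        simp: has_real_derivative_iff_has_vector_derivative[symmetric])
  moreover have "g * exp b - g * exp a = g"
    unfolding a_def b_def using k1 by (simp add: algebra_simps)
  ultimately have int_g: "((\<lambda>u. g * exp u) has_integral g) {a..b}" by simp
  have "g \<le> integral {a..b} (\<lambda>u. u powr \<beta> * exp (- (c * u)))"
  proof (rule order.trans[OF eq_refl[OF integral_unique[OF int_g, symmetric]] integral_le])
    show "(\<lambda>u. u powr \<beta> * exp (- (c * u))) integrable_on {a..b}"
      using a0 by (intro integrable_continuous_interval continuous_intros) auto
    fix u assume u: "u \<in> {a..b}"
    then have u0: "u > 0" using a0 by auto
    have "\<beta> \<le> (1 + c) * u"
      using u \<beta> mult_nonneg_nonneg[OF c less_imp_le[OF u0]] unfolding a_def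
      by (simp add: distrib_right)
    from powr_mult_exp_decreasing[OF _ u0 this] u c
    have "g \<le> u powr \<beta> * exp (- ((1 + c) * u))" unfolding g_eq by auto
    then have "g * exp u \<le> u powr \<beta> * exp (- ((1 + c) * u)) * exp u" by simp
    also have "\<dots> = u powr \<beta> * exp (- (c * u))"
      by (simp add: mult.assoc exp_add[symmetric] algebra_simps)
    finally show "g * exp u \<le> u powr \<beta> * exp (- (c * u))" .
  qed (use int_g in blast)
  then show ?thesis unfolding g_def a_def b_def .
qed

lemma log_powr_series_bound:
  fixes \<beta> c :: real and a :: nat
  assumes \<beta>: "\<beta> > -1" and c: "c > 0" and a: "real a > 1" and la: "\<beta> \<le> ln (real a)"
  defines "w \<equiv> \<lambda>k. ln (real k) powr \<beta> / real k powr (1 + c)"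
  shows "summable (\<lambda>j. w (j + a + 1))" and "(\<Sum>j. w (j + a + 1)) \<le> Gamma (\<beta> + 1) / c powr (\<beta> + 1)"
proof -
  define h where "h u = u powr \<beta> * exp (- (c * u))" for u :: real
  have partial: "(\<Sum>j<N. w (j + a + 1)) \<le> integral {ln (real a)..ln (real (N + a))} h" for N
  proof (induction N)
    case (Suc N)
    have "w (N + a + 1) \<le> integral {ln (real (N + a + 1) - 1)..ln (real (N + a + 1))} h"
      unfolding w_def h_def
      using a la c by (intro log_powr_div_powr_le_integral) (auto intro: order.trans)
    also have "real (N + a + 1) - 1 = real (N + a)" by simp
    finally have "(\<Sum>j<Suc N. w (j + a + 1))
        \<le> integral {ln (real a)..ln (real (N + a))} h
          + integral {ln (real (N + a))..ln (real (Suc N + a))} h"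
      using Suc.IH by simp
    also have "\<dots> = integral {ln (real a)..ln (real (Suc N + a))} h"
      using a unfolding h_def
      by (intro Henstock_Kurzweil_Integration.integral_combine integrable_continuous_interval
          continuous_intros) auto
    finally show ?case .
  qed simp
  have bounded: "(\<Sum>j<N. w (j + a + 1)) \<le> Gamma (\<beta> + 1) / c powr (\<beta> + 1)" for N
    using partial[of N] integral_powr_exp_le_Gamma[OF \<beta> c, of "ln (real a)" "ln (real (N + a))"] a
    unfolding h_def by simp
  show "summable (\<lambda>j. w (j + a + 1))"
    by (rule summableI_nonneg_bounded[OF _ bounded]) (simp add: w_def)
  then show "(\<Sum>j. w (j + a + 1)) \<le> Gamma (\<beta> + 1) / c powr (\<beta> + 1)"
    by (rule suminf_le_const[OF _ bounded])
qed

lemma summable_log_powr_div_powr: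
  fixes \<beta> c :: real
  assumes \<beta>: "\<beta> > -1" and c: "c > 0"
  shows "summable (\<lambda>k. ln (real k) powr \<beta> / real k powr (1 + c))"
proof -
  define a where "a = nat \<lceil>exp (max \<beta> 1)\<rceil>"
  have "exp (max \<beta> 1) \<le> real a" unfolding a_def by linarith
  moreover have "exp 1 > (1::real)" by simp
  ultimately have "real a > 1" "\<beta> \<le> ln (real a)"
    by (smt (verit, best) exp_le_cancel_iff exp_ln_iff)+
  from log_powr_series_bound(1)[OF \<beta> c this] show ?thesis
    by (subst summable_iff_shift[symmetric, of _ "a + 1"]) (simp add: add.assoc)
qed

section \<open>Sums of independent bounded variables\<close>

lemma (in prob_space) indep_sets_reindex:
  assumes inj: "inj_on f I" and ind: "indep_sets F (f ` I)"
  shows "indep_sets (\<lambda>i. F (f i)) I"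
  unfolding indep_sets_def
proof (intro conjI allI impI ballI)
  fix i assume "i \<in> I" then show "F (f i) \<subseteq> events" using ind unfolding indep_sets_def by auto
next
  fix J A assume J: "J \<subseteq> I" "J \<noteq> {}" "finite J" and A: "A \<in> Pi J (\<lambda>i. F (f i))"
  define A' where "A' j' = A (the_inv_into J f j')" for j'
  have injJ: "inj_on f J" using inj J(1) by (rule inj_on_subset)
  have A'f: "A' (f j) = A j" if "j \<in> J" for j
    unfolding A'_def using the_inv_into_f_f[OF injJ that] by simp
  have "A' \<in> Pi (f ` J) F" using A A'f by auto
  then have "prob (\<Inter>j\<in>f ` J. A' j) = (\<Prod>j\<in>f ` J. prob (A' j))"
    using ind J unfolding indep_sets_def by (metis finite_imageI image_is_empty image_mono)
  moreover have "(\<Inter>j\<in>f ` J. A' j) = (\<Inter>j\<in>J. A j)" using A'f by auto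
  moreover have "(\<Prod>j\<in>f ` J. prob (A' j)) = (\<Prod>j\<in>J. prob (A j))"
    using A'f by (simp add: prod.reindex[OF injJ])
  ultimately show "prob (\<Inter>j\<in>J. A j) = (\<Prod>j\<in>J. prob (A j))" by simp
qed

lemma (in prob_space) indep_vars_reindex:
  assumes "inj_on f I" and "indep_vars M' X (f ` I)"
  shows "indep_vars (\<lambda>i. M' (f i)) (\<lambda>i. X (f i)) I"
  using assms indep_sets_reindex[of f I
      "\<lambda>i. sigma_sets (space M) {X i -` A \<inter> space M | A. A \<in> sets (M' i)}"]
  unfolding indep_vars_def by auto

lemma (in prob_space) expectation_square_indep_sum:
  fixes X :: "nat \<Rightarrow> 'a \<Rightarrow> real"
  assumes fin: "finite I" and ind: "indep_vars (\<lambda>_. borel) X I"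
    and bnd: "\<And>i \<omega>. i \<in> I \<Longrightarrow> \<omega> \<in> space M \<Longrightarrow> \<bar>X i \<omega>\<bar> \<le> B"
    and mean: "\<And>i. i \<in> I \<Longrightarrow> expectation (X i) = 0"
  shows "expectation (\<lambda>\<omega>. (\<Sum>i\<in>I. X i \<omega>)\<^sup>2) = (\<Sum>i\<in>I. expectation (\<lambda>\<omega>. (X i \<omega>)\<^sup>2))"
proof -
  have rv: "X i \<in> borel_measurable M" if "i \<in> I" for i
    using ind that unfolding indep_vars_def by auto
  have intX: "integrable M (X i)" if "i \<in> I" for i
    using that bnd rv by (intro integrable_const_bound[where B=B]) auto
  have intXX: "integrable M (\<lambda>\<omega>. X i \<omega> * X j \<omega>)" if "i \<in> I" "j \<in> I" for i j
    using that rv bnd[OF that(1)] bnd[OF that(2)]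
    by (intro integrable_const_bound[where B="B * B"] AE_I2) (auto simp: abs_mult intro: mult_mono')
  have cross: "expectation (\<lambda>\<omega>. X i \<omega> * X j \<omega>) = 0" if "i \<in> I" "j \<in> I" "i \<noteq> j" for i j
  proof -
    have "indep_vars (\<lambda>_. borel) X {i, j}" using ind that by (auto intro: indep_vars_subset)
    from indep_vars_lebesgue_integral[OF _ this] that intX
    have "expectation (\<lambda>\<omega>. \<Prod>l\<in>{i,j}. X l \<omega>) = (\<Prod>l\<in>{i,j}. expectation (X l))" by auto
    then show ?thesis using that mean by simp
  qed
  have "expectation (\<lambda>\<omega>. (\<Sum>i\<in>I. X i \<omega>)\<^sup>2) = (\<Sum>i\<in>I. \<Sum>j\<in>I. expectation (\<lambda>\<omega>. X i \<omega> * X j \<omega>))"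
    using intXX by (simp add: power2_eq_square sum_product Bochner_Integration.integral_sum)
  also have "\<dots> = (\<Sum>i\<in>I. expectation (\<lambda>\<omega>. X i \<omega> * X i \<omega>))"
    using fin cross by (intro sum.cong refl) (simp add: sum.remove[of I])
  finally show ?thesis by (simp add: power2_eq_square)
qed

lemma (in prob_space) expectation_square_le_add_indep:
  fixes S R W :: "'a \<Rightarrow> real"
  assumes [measurable]: "S \<in> borel_measurable M" "R \<in> borel_measurable M" "W \<in> borel_measurable M"
    and bnd: "\<And>\<omega>. \<omega> \<in> space M \<Longrightarrow> \<bar>S \<omega>\<bar> \<le> C \<and> \<bar>R \<omega>\<bar> \<le> C"
    and W: "\<And>\<omega>. 0 \<le> W \<omega> \<and> W \<omega> \<le> 1"
    and ind: "indep_var borel (\<lambda>\<omega>. S \<omega> * W \<omega>) borel R" and mean: "expectation R = 0"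
  shows "expectation (\<lambda>\<omega>. (S \<omega>)\<^sup>2 * W \<omega>) \<le> expectation (\<lambda>\<omega>. (S \<omega> + R \<omega>)\<^sup>2 * W \<omega>)"
proof -
  have bounded: "integrable M (\<lambda>\<omega>. (F \<omega>)\<^sup>2 * W \<omega>)"
    if [measurable]: "F \<in> borel_measurable M" and F: "\<And>\<omega>. \<omega> \<in> space M \<Longrightarrow> \<bar>F \<omega>\<bar> \<le> K" for F K
  proof (intro integrable_const_bound[where B="K\<^sup>2"] AE_I2)
    fix \<omega> assume "\<omega> \<in> space M"
    then have "(F \<omega>)\<^sup>2 \<le> K\<^sup>2" using power_mono[OF F abs_ge_zero, of \<omega> 2] by simp
    then show "norm ((F \<omega>)\<^sup>2 * W \<omega>) \<le> K\<^sup>2"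
      using W[of \<omega>] mult_left_le[of "W \<omega>" "(F \<omega>)\<^sup>2"] by simp
  qed simp
  have int_SW: "integrable M (\<lambda>\<omega>. S \<omega> * W \<omega>)"
  proof (intro integrable_const_bound[where B=C] AE_I2)
    fix \<omega> assume "\<omega> \<in> space M"
    then show "norm (S \<omega> * W \<omega>) \<le> C"
      using bnd W[of \<omega>] mult_left_le[of "W \<omega>" "\<bar>S \<omega>\<bar>"] by (force simp: abs_mult)
  qed simp
  have int_R: "integrable M R" using bnd by (intro integrable_const_bound[where B=C]) auto
  have "expectation (\<lambda>\<omega>. S \<omega> * W \<omega> * R \<omega>) = 0"
    using indep_var_lebesgue_integral[OF ind int_SW int_R] mean by simp
  then have "expectation (\<lambda>\<omega>. (S \<omega>)\<^sup>2 * W \<omega>)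
      = expectation (\<lambda>\<omega>. (S \<omega>)\<^sup>2 * W \<omega> + 2 * (S \<omega> * W \<omega> * R \<omega>))"
    using bounded[of S C] bnd indep_var_integrable[OF ind int_SW int_R] by simp
  also have "\<dots> \<le> expectation (\<lambda>\<omega>. (S \<omega> + R \<omega>)\<^sup>2 * W \<omega>)"
  proof (intro integral_mono)
    fix \<omega>
    show "(S \<omega>)\<^sup>2 * W \<omega> + 2 * (S \<omega> * W \<omega> * R \<omega>) \<le> (S \<omega> + R \<omega>)\<^sup>2 * W \<omega>"
      using W[of \<omega>] by (simp add: power2_sum algebra_simps)
  next
    have "\<bar>S \<omega> + R \<omega>\<bar> \<le> 2 * C" if "\<omega> \<in> space M" for \<omega>
      using bnd[OF that] abs_triangle_ineq[of "S \<omega>" "R \<omega>"] by linarith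
    then show "integrable M (\<lambda>\<omega>. (S \<omega> + R \<omega>)\<^sup>2 * W \<omega>)" by (intro bounded) auto
  qed (use bounded[of S C] bnd indep_var_integrable[OF ind int_SW int_R] in auto)
  finally show ?thesis .
qed

lemma (in prob_space) expectation_partial_sum_square_mono:
  fixes X :: "nat \<Rightarrow> 'a \<Rightarrow> real" and \<phi> :: "(nat \<Rightarrow> real) \<Rightarrow> real"
  assumes ind: "indep_vars (\<lambda>_. borel) X {..<n}"
    and bnd: "\<And>i \<omega>. i < n \<Longrightarrow> \<omega> \<in> space M \<Longrightarrow> \<bar>X i \<omega>\<bar> \<le> B"
    and mean: "\<And>i. i < n \<Longrightarrow> expectation (X i) = 0"
    and k: "k \<le> n"
    and \<phi>: "\<phi> \<in> borel_measurable (PiM {..<k} (\<lambda>_. borel))" "\<And>f. 0 \<le> \<phi> f \<and> \<phi> f \<le> 1"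
  defines "W \<equiv> \<lambda>\<omega>. \<phi> (restrict (\<lambda>i. X i \<omega>) {..<k})"
  shows "expectation (\<lambda>\<omega>. (\<Sum>i<k. X i \<omega>)\<^sup>2 * W \<omega>) \<le> expectation (\<lambda>\<omega>. (\<Sum>i<n. X i \<omega>)\<^sup>2 * W \<omega>)"
proof -
  have rv[measurable]: "X i \<in> borel_measurable M" if "i < n" for i
    using ind that unfolding indep_vars_def by auto
  have W_meas: "W \<in> borel_measurable M"
    unfolding W_def using k by (intro measurable_compose[OF _ \<phi>(1)] measurable_restrict) auto
  have W01: "0 \<le> W \<omega> \<and> W \<omega> \<le> 1" for \<omega> unfolding W_def using \<phi>(2) .
  have sum_bnd: "\<bar>\<Sum>i\<in>I. X i \<omega>\<bar> \<le> real n * B" if "I \<subseteq> {..<n}" "\<omega> \<in> space M" for I \<omega>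
  proof -
    have "\<bar>\<Sum>i\<in>I. X i \<omega>\<bar> \<le> real (card I) * B"
      using that bnd
      by (intro order.trans[OF sum_abs] order.trans[OF sum_bounded_above[of _ _ B]]) auto
    also have "\<dots> \<le> real n * B"
      using that bnd[of 0 \<omega>] card_mono[OF _ that(1)]
      by (cases "n = 0") (auto intro: mult_right_mono)
    finally show ?thesis .
  qed
  have "indep_var borel ((\<lambda>f. (\<Sum>i<k. f i) * \<phi> f) \<circ> (\<lambda>\<omega>. restrict (\<lambda>i. X i \<omega>) {..<k}))
                   borel ((\<lambda>f. \<Sum>i\<in>{k..<n}. f i) \<circ> (\<lambda>\<omega>. restrict (\<lambda>i. X i \<omega>) {k..<n}))"
    using k \<phi>(1) by (intro indep_var_compose[OF indep_var_restrict[OF ind]]) auto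
  moreover have "(\<lambda>f. (\<Sum>i<k. f i) * \<phi> f) \<circ> (\<lambda>\<omega>. restrict (\<lambda>i. X i \<omega>) {..<k})
      = (\<lambda>\<omega>. (\<Sum>i<k. X i \<omega>) * W \<omega>)"
    by (auto simp: W_def sum_restrict_lessThan simp del: restrict_apply)
  moreover have "(\<lambda>f. \<Sum>i\<in>{k..<n}. f i) \<circ> (\<lambda>\<omega>. restrict (\<lambda>i. X i \<omega>) {k..<n})
      = (\<lambda>\<omega>. \<Sum>i\<in>{k..<n}. X i \<omega>)"
    by (auto intro!: sum.cong)
  ultimately have ind_SR: "indep_var borel (\<lambda>\<omega>. (\<Sum>i<k. X i \<omega>) * W \<omega>) borel (\<lambda>\<omega>. \<Sum>i\<in>{k..<n}. X i \<omega>)"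
    by simp
  have split: "(\<Sum>i<n. X i \<omega>) = (\<Sum>i<k. X i \<omega>) + (\<Sum>i\<in>{k..<n}. X i \<omega>)" for \<omega>
    using k by (metis atLeast0LessThan sum.atLeastLessThan_concat zero_le)
  have "expectation (\<lambda>\<omega>. \<Sum>i\<in>{k..<n}. X i \<omega>) = 0"
    using mean rv bnd
    by (subst Bochner_Integration.integral_sum) (auto intro: integrable_const_bound[where B=B])
  moreover have "{k..<n} \<subseteq> {..<n}" by auto
  ultimately show ?thesis
    unfolding split using sum_bnd[of "{..<k}"] sum_bnd[of "{k..<n}"] k
    by (intro expectation_square_le_add_indep[OF _ _ W_meas _ W01 ind_SR] borel_measurable_sum rv)
      auto
qed

text \<open>The first-hit indicators split the event of the maximal inequality into disjoint pieces,
  each determined by the variables observed up to the hitting time.\<close>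

definition first_hit :: "real \<Rightarrow> nat \<Rightarrow> (nat \<Rightarrow> real) \<Rightarrow> real" where
  "first_hit \<epsilon> k f = (if \<epsilon> \<le> \<bar>\<Sum>i<k. f i\<bar> \<and> (\<forall>j<k. \<not> \<epsilon> \<le> \<bar>\<Sum>i<j. f i\<bar>) then 1 else 0)"

lemma first_hit_measurable: "first_hit \<epsilon> k \<in> borel_measurable (PiM {..<k} (\<lambda>_. borel))"
  unfolding first_hit_def by measurable

lemma first_hit_restrict: "k \<le> m \<Longrightarrow> first_hit \<epsilon> k (restrict f {..<m}) = first_hit \<epsilon> k f"
  by (simp add: first_hit_def sum_restrict_lessThan del: restrict_apply)

lemma sum_first_hit: "(\<Sum>k\<le>n. first_hit \<epsilon> k f) = (if \<exists>k\<le>n. \<epsilon> \<le> \<bar>\<Sum>i<k. f i\<bar> then 1 else 0)"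
proof (induction n)
  case (Suc n)
  show ?case
  proof (cases "\<exists>k\<le>n. \<epsilon> \<le> \<bar>\<Sum>i<k. f i\<bar>")
    case True
    then have "first_hit \<epsilon> (Suc n) f = 0" by (auto simp: first_hit_def less_Suc_eq_le)
    with True show ?thesis by (simp add: Suc.IH) (meson le_SucI)
  next
    case False
    then have "(\<exists>k\<le>Suc n. \<epsilon> \<le> \<bar>\<Sum>i<k. f i\<bar>) \<longleftrightarrow> \<epsilon> \<le> \<bar>\<Sum>i<Suc n. f i\<bar>"
      by (auto simp: le_Suc_eq)
    with False show ?thesis by (simp add: Suc.IH first_hit_def less_Suc_eq_le del: sum.lessThan_Suc)
  qed
qed (simp add: first_hit_def)

lemma (in prob_space) first_hit_measurable_comp:
  assumes "\<And>i. i < k \<Longrightarrow> X i \<in> borel_measurable M"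
  shows "(\<lambda>\<omega>. first_hit \<epsilon> k (\<lambda>i. X i \<omega>)) \<in> borel_measurable M"
proof -
  have "(\<lambda>\<omega>. restrict (\<lambda>i. X i \<omega>) {..<k}) \<in> measurable M (PiM {..<k} (\<lambda>_. borel))"
    using assms by (intro measurable_restrict) auto
  from measurable_compose[OF this first_hit_measurable] show ?thesis
    by (simp add: first_hit_restrict)
qed

lemma (in prob_space) sum_expectation_first_hit_le:
  fixes X :: "nat \<Rightarrow> 'a \<Rightarrow> real"
  assumes ind: "indep_vars (\<lambda>_. borel) X {..<n}"
    and bnd: "\<And>i \<omega>. i < n \<Longrightarrow> \<omega> \<in> space M \<Longrightarrow> \<bar>X i \<omega>\<bar> \<le> B"
    and mean: "\<And>i. i < n \<Longrightarrow> expectation (X i) = 0"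
  shows "(\<Sum>k\<le>n. expectation (\<lambda>\<omega>. (\<Sum>i<k. X i \<omega>)\<^sup>2 * first_hit \<epsilon> k (\<lambda>i. X i \<omega>)))
           \<le> (\<Sum>i<n. expectation (\<lambda>\<omega>. (X i \<omega>)\<^sup>2))"
proof -
  have rv[measurable]: "X i \<in> borel_measurable M" if "i < n" for i
    using ind that unfolding indep_vars_def by auto
  define S where "S \<omega> = (\<Sum>i<n. X i \<omega>)" for \<omega>
  define W where "W k \<omega> = first_hit \<epsilon> k (\<lambda>i. X i \<omega>)" for k \<omega>
  have [measurable]: "S \<in> borel_measurable M"
    unfolding S_def by (intro borel_measurable_sum rv) auto
  have [measurable]: "W k \<in> borel_measurable M" if "k \<le> n" for k
    unfolding W_def using that by (intro first_hit_measurable_comp rv) auto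
  have "\<bar>S \<omega>\<bar> \<le> real n * B" if "\<omega> \<in> space M" for \<omega>
    unfolding S_def using that bnd
    by (intro order.trans[OF sum_abs] order.trans[OF sum_bounded_above[of _ _ B]]) auto
  then have S_bnd: "(S \<omega>)\<^sup>2 \<le> (real n * B)\<^sup>2" if "\<omega> \<in> space M" for \<omega>
    using power_mono[OF _ abs_ge_zero, of _ _ 2] that by fastforce
  have int_S: "integrable M (\<lambda>\<omega>. (S \<omega>)\<^sup>2)"
    using S_bnd by (intro integrable_const_bound[where B="(real n * B)\<^sup>2"] AE_I2) auto
  have int_SW: "integrable M (\<lambda>\<omega>. (S \<omega>)\<^sup>2 * W k \<omega>)" if "k \<le> n" for k
    using that S_bnd
    by (intro integrable_const_bound[where B="(real n * B)\<^sup>2"] AE_I2)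
      (auto simp: W_def first_hit_def)
  have "(\<Sum>k\<le>n. expectation (\<lambda>\<omega>. (\<Sum>i<k. X i \<omega>)\<^sup>2 * W k \<omega>))
      \<le> (\<Sum>k\<le>n. expectation (\<lambda>\<omega>. (S \<omega>)\<^sup>2 * W k \<omega>))"
  proof (intro sum_mono)
    fix k assume "k \<in> {..n}"
    have "W k \<omega> = first_hit \<epsilon> k (restrict (\<lambda>i. X i \<omega>) {..<k})" for \<omega>
      unfolding W_def by (simp add: first_hit_restrict)
    then show "expectation (\<lambda>\<omega>. (\<Sum>i<k. X i \<omega>)\<^sup>2 * W k \<omega>) \<le> expectation (\<lambda>\<omega>. (S \<omega>)\<^sup>2 * W k \<omega>)"
      unfolding S_def using \<open>k \<in> {..n}\<close> first_hit_measurable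
      by (simp only:)
        (intro expectation_partial_sum_square_mono[OF ind bnd mean]; auto simp: first_hit_def)
  qed
  also have "\<dots> = expectation (\<lambda>\<omega>. (S \<omega>)\<^sup>2 * (\<Sum>k\<le>n. W k \<omega>))"
    using int_SW by (simp add: sum_distrib_left Bochner_Integration.integral_sum[symmetric])
  also have "\<dots> \<le> expectation (\<lambda>\<omega>. (S \<omega>)\<^sup>2)"
  proof (intro integral_mono int_S)
    show "integrable M (\<lambda>\<omega>. (S \<omega>)\<^sup>2 * (\<Sum>k\<le>n. W k \<omega>))"
      unfolding sum_distrib_left using int_SW by (intro Bochner_Integration.integrable_sum) auto
    show "(S \<omega>)\<^sup>2 * (\<Sum>k\<le>n. W k \<omega>) \<le> (S \<omega>)\<^sup>2" for \<omega>
      by (simp add: W_def sum_first_hit)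
  qed
  also have "\<dots> = (\<Sum>i<n. expectation (\<lambda>\<omega>. (X i \<omega>)\<^sup>2))"
    unfolding S_def using ind bnd mean by (intro expectation_square_indep_sum) auto
  finally show ?thesis unfolding W_def .
qed

lemma (in prob_space) kolmogorov_maximal_inequality:
  fixes X :: "nat \<Rightarrow> 'a \<Rightarrow> real"
  assumes ind: "indep_vars (\<lambda>_. borel) X {..<n}"
    and bnd: "\<And>i \<omega>. i < n \<Longrightarrow> \<omega> \<in> space M \<Longrightarrow> \<bar>X i \<omega>\<bar> \<le> B"
    and mean: "\<And>i. i < n \<Longrightarrow> expectation (X i) = 0"
    and eps: "\<epsilon> > 0"
  shows "prob {\<omega>\<in>space M. \<exists>k\<le>n. \<epsilon> \<le> \<bar>\<Sum>i<k. X i \<omega>\<bar>}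
     \<le> (\<Sum>i<n. expectation (\<lambda>\<omega>. (X i \<omega>)\<^sup>2)) / \<epsilon>\<^sup>2"
proof -
  have rv[measurable]: "X i \<in> borel_measurable M" if "i < n" for i
    using ind that unfolding indep_vars_def by auto
  define S where "S k \<omega> = (\<Sum>i<k. X i \<omega>)" for k \<omega>
  define W where "W k \<omega> = first_hit \<epsilon> k (\<lambda>i. X i \<omega>)" for k \<omega>
  define E where "E = {\<omega>\<in>space M. \<exists>k\<le>n. \<epsilon> \<le> \<bar>S k \<omega>\<bar>}"
  have [measurable]: "S k \<in> borel_measurable M" if "k \<le> n" for k
    unfolding S_def using that by (intro borel_measurable_sum rv) auto
  have [measurable]: "W k \<in> borel_measurable M" if "k \<le> n" for k
    unfolding W_def using that by (intro first_hit_measurable_comp rv) auto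
  have "\<bar>S k \<omega>\<bar> \<le> real k * B" if "k \<le> n" "\<omega> \<in> space M" for k \<omega>
    unfolding S_def using that bnd
    by (intro order.trans[OF sum_abs] order.trans[OF sum_bounded_above[of _ _ B]]) auto
  then have S_bnd: "(S k \<omega>)\<^sup>2 \<le> (real k * B)\<^sup>2" if "k \<le> n" "\<omega> \<in> space M" for k \<omega>
    using power_mono[OF _ abs_ge_zero, of _ _ 2] that by fastforce
  have int_SW: "integrable M (\<lambda>\<omega>. (S k \<omega>)\<^sup>2 * W k \<omega>)" if "k \<le> n" for k
    using that S_bnd[OF that]
    by (intro integrable_const_bound[where B="(real k * B)\<^sup>2"] AE_I2)
      (auto simp: W_def first_hit_def)
  have int_W: "integrable M (\<lambda>\<omega>. \<epsilon>\<^sup>2 * W k \<omega>)" if "k \<le> n" for k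
    using that
    by (intro integrable_const_bound[where B="\<epsilon>\<^sup>2"] AE_I2) (auto simp: W_def first_hit_def)
  have indicator_E: "indicator E \<omega> = (\<Sum>k\<le>n. W k \<omega>)" if "\<omega> \<in> space M" for \<omega>
    using that unfolding W_def sum_first_hit by (simp add: E_def S_def indicator_def)
  have "\<epsilon>\<^sup>2 * prob E = expectation (\<lambda>\<omega>. \<epsilon>\<^sup>2 * indicator E \<omega>)"
    unfolding E_def by simp
  also have "\<dots> = (\<Sum>k\<le>n. expectation (\<lambda>\<omega>. \<epsilon>\<^sup>2 * W k \<omega>))"
    using int_W
    by (simp add: indicator_E sum_distrib_left Bochner_Integration.integral_sum[symmetric]
        cong: Bochner_Integration.integral_cong)
  also have "\<dots> \<le> (\<Sum>k\<le>n. expectation (\<lambda>\<omega>. (S k \<omega>)\<^sup>2 * W k \<omega>))"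
  proof (intro sum_mono integral_mono)
    fix k \<omega>
    have "W k \<omega> = 1 \<Longrightarrow> \<epsilon> \<le> \<bar>S k \<omega>\<bar>" and "W k \<omega> = 0 \<or> W k \<omega> = 1"
      by (auto simp: W_def S_def first_hit_def split: if_splits)
    then show "\<epsilon>\<^sup>2 * W k \<omega> \<le> (S k \<omega>)\<^sup>2 * W k \<omega>"
      using eps power_mono[of \<epsilon> "\<bar>S k \<omega>\<bar>" 2] by auto
  qed (use int_W int_SW in auto)
  also have "\<dots> \<le> (\<Sum>i<n. expectation (\<lambda>\<omega>. (X i \<omega>)\<^sup>2))"
    unfolding S_def W_def by (rule sum_expectation_first_hit_le[OF ind bnd mean])
  finally show ?thesis using eps unfolding E_def S_def by (simp add: field_simps)
qed

lemma (in prob_space) prob_tail_partial_sums_ge: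
  fixes X :: "nat \<Rightarrow> 'a \<Rightarrow> real"
  assumes ind: "indep_vars (\<lambda>_. borel) X UNIV"
    and bnd: "\<And>i \<omega>. \<omega> \<in> space M \<Longrightarrow> \<bar>X i \<omega>\<bar> \<le> B i"
    and mean: "\<And>i. expectation (X i) = 0"
    and summ: "summable (\<lambda>i. expectation (\<lambda>\<omega>. (X i \<omega>)\<^sup>2))"
    and eps: "\<epsilon> > 0"
  shows "prob {\<omega>\<in>space M. \<exists>k. \<epsilon> \<le> \<bar>\<Sum>i<k. X (i + m) \<omega>\<bar>}
           \<le> (\<Sum>i. expectation (\<lambda>\<omega>. (X (i + m) \<omega>)\<^sup>2)) / \<epsilon>\<^sup>2"
proof -
  have rv[measurable]: "X i \<in> borel_measurable M" for i
    using ind unfolding indep_vars_def by auto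
  define E where "E n = {\<omega>\<in>space M. \<exists>k\<le>n. \<epsilon> \<le> \<bar>\<Sum>i<k. X (i + m) \<omega>\<bar>}" for n
  have E_bound: "prob (E n) \<le> (\<Sum>i. expectation (\<lambda>\<omega>. (X (i + m) \<omega>)\<^sup>2)) / \<epsilon>\<^sup>2" for n
  proof -
    have "indep_vars (\<lambda>_. borel) X ((\<lambda>i. i + m) ` {..<n})"
      by (rule indep_vars_subset[OF ind]) auto
    then have ind_shift: "indep_vars (\<lambda>_. borel) (\<lambda>i. X (i + m)) {..<n}"
      using indep_vars_reindex[of "\<lambda>i. i + m" "{..<n}"] by (simp add: inj_on_def)
    have "prob (E n) \<le> (\<Sum>i<n. expectation (\<lambda>\<omega>. (X (i + m) \<omega>)\<^sup>2)) / \<epsilon>\<^sup>2"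
      unfolding E_def
    proof (rule kolmogorov_maximal_inequality[OF ind_shift _ mean eps])
      fix i \<omega> assume "i < n" "\<omega> \<in> space M"
      then show "\<bar>X (i + m) \<omega>\<bar> \<le> (\<Sum>j<n. \<bar>B (j + m)\<bar>)"
        using bnd[of \<omega> "i + m"] by (intro order.trans[OF _ member_le_sum[of i]]) auto
    qed
    also have "\<dots> \<le> (\<Sum>i. expectation (\<lambda>\<omega>. (X (i + m) \<omega>)\<^sup>2)) / \<epsilon>\<^sup>2"
      using eps summ
      by (intro divide_right_mono sum_le_suminf summable_ignore_initial_segment) auto
    finally show ?thesis .
  qed
  have "(\<lambda>n. prob (E n)) \<longlonglongrightarrow> prob (\<Union>n. E n)"
    by (intro Lim_measure_incseq) (auto simp: E_def incseq_def intro: le_trans)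
  moreover have "(\<Union>n. E n) = {\<omega>\<in>space M. \<exists>k. \<epsilon> \<le> \<bar>\<Sum>i<k. X (i + m) \<omega>\<bar>}"
    unfolding E_def by auto
  ultimately show ?thesis using E_bound by (auto intro: LIMSEQ_le_const2)
qed

theorem (in prob_space) AE_summable_indep:
  fixes X :: "nat \<Rightarrow> 'a \<Rightarrow> real"
  assumes ind: "indep_vars (\<lambda>_. borel) X UNIV"
    and bnd: "\<And>i \<omega>. \<omega> \<in> space M \<Longrightarrow> \<bar>X i \<omega>\<bar> \<le> B i"
    and mean: "\<And>i. expectation (X i) = 0"
    and summ: "summable (\<lambda>i. expectation (\<lambda>\<omega>. (X i \<omega>)\<^sup>2))"
  shows "AE \<omega> in M. summable (\<lambda>i. X i \<omega>)"
proof -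
  have rv[measurable]: "X i \<in> borel_measurable M" for i
    using ind unfolding indep_vars_def by auto
  have AE_small: "AE \<omega> in M. \<exists>m. \<forall>k. \<bar>\<Sum>i<k. X (i + m) \<omega>\<bar> < \<epsilon>" if eps: "\<epsilon> > 0" for \<epsilon>
  proof -
    define G where "G = {\<omega>\<in>space M. \<forall>m. \<exists>k. \<epsilon> \<le> \<bar>\<Sum>i<k. X (i + m) \<omega>\<bar>}"
    have G_sets[measurable]: "G \<in> sets M" unfolding G_def by measurable
    have "prob G \<le> (\<Sum>i. expectation (\<lambda>\<omega>. (X (i + m) \<omega>)\<^sup>2)) / \<epsilon>\<^sup>2" for m
    proof (rule order.trans[OF finite_measure_mono
          prob_tail_partial_sums_ge[OF ind bnd mean summ eps]])
      show "G \<subseteq> {\<omega>\<in>space M. \<exists>k. \<epsilon> \<le> \<bar>\<Sum>i<k. X (i + m) \<omega>\<bar>}" unfolding G_def by auto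
    qed measurable
    moreover have "(\<lambda>m. (\<Sum>i. expectation (\<lambda>\<omega>. (X (i + m) \<omega>)\<^sup>2)) / \<epsilon>\<^sup>2) \<longlonglongrightarrow> 0"
      using tendsto_divide_zero[OF suminf_exist_split2[OF summ]] by simp
    ultimately have "prob G \<le> 0" by (intro LIMSEQ_le_const) auto
    then have "G \<in> null_sets M"
      by (simp add: emeasure_eq_measure null_sets_def measure_nonneg antisym)
    from AE_not_in[OF this] AE_space show ?thesis
      by eventually_elim (auto simp: G_def not_le)
  qed
  have "AE \<omega> in M. \<forall>j. \<exists>m. \<forall>k. \<bar>\<Sum>i<k. X (i + m) \<omega>\<bar> < 1 / Suc j"
    unfolding AE_all_countable by (intro allI AE_small) auto
  then show ?thesis
  proof eventually_elim
    case (elim \<omega>)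
    show ?case
    proof (rule summable_if_tail_sums_small)
      fix e :: real assume "e > 0"
      then obtain j :: nat where "1 / Suc j < e" by (rule nat_approx_posE)
      then show "\<exists>m. \<forall>k. \<bar>\<Sum>i<k. X (i + m) \<omega>\<bar> < e" using elim by (blast intro: less_trans)
    qed
  qed
qed

lemma (in prob_space) expectation_exp_le:
  fixes X :: "'a \<Rightarrow> real"
  assumes [measurable]: "X \<in> borel_measurable M"
    and bnd: "\<And>\<omega>. \<omega> \<in> space M \<Longrightarrow> \<bar>X \<omega>\<bar> \<le> B"
    and t: "t \<ge> 0" "t * B \<le> D"
    and mean: "expectation X = 0"
  shows "integrable M (\<lambda>\<omega>. exp (t * X \<omega>))"
    and "expectation (\<lambda>\<omega>. exp (t * X \<omega>)) \<le> exp (t\<^sup>2 * exp D / 2 * expectation (\<lambda>\<omega>. (X \<omega>)\<^sup>2))"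
proof -
  have intX: "integrable M X" using bnd by (intro integrable_const_bound[where B=B]) auto
  have intX2: "integrable M (\<lambda>\<omega>. (X \<omega>)\<^sup>2)"
    using bnd power_mono[OF bnd abs_ge_zero, of _ 2]
    by (intro integrable_const_bound[where B="B\<^sup>2"] AE_I2) auto
  have tX: "\<bar>t * X \<omega>\<bar> \<le> D" if "\<omega> \<in> space M" for \<omega>
    using bnd[OF that] t by (auto simp: abs_mult intro: order.trans[OF mult_left_mono])
  show int_exp: "integrable M (\<lambda>\<omega>. exp (t * X \<omega>))"
    using tX[THEN abs_le_D1] by (intro integrable_const_bound[where B="exp D"] AE_I2) auto
  have "expectation (\<lambda>\<omega>. exp (t * X \<omega>)) \<le> expectation (\<lambda>\<omega>. 1 + t * X \<omega> + t\<^sup>2 * exp D / 2 * (X \<omega>)\<^sup>2)"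
    using int_exp intX intX2 exp_le_quadratic[OF tX]
    by (intro integral_mono) (auto simp: power_mult_distrib mult_ac)
  also have "\<dots> = 1 + t\<^sup>2 * exp D / 2 * expectation (\<lambda>\<omega>. (X \<omega>)\<^sup>2)"
    using intX intX2 mean by (simp add: prob_space)
  also have "\<dots> \<le> exp (t\<^sup>2 * exp D / 2 * expectation (\<lambda>\<omega>. (X \<omega>)\<^sup>2))"
    by (rule exp_ge_add_one_self)
  finally show "expectation (\<lambda>\<omega>. exp (t * X \<omega>)) \<le> \<dots>" .
qed

lemma (in prob_space) prob_gt_le_exp_moment:
  fixes Y :: "'a \<Rightarrow> real"
  assumes [measurable]: "Y \<in> borel_measurable M"
    and t: "t \<ge> 0" and int: "integrable M (\<lambda>\<omega>. exp (t * Y \<omega>))"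
  shows "prob {\<omega>\<in>space M. x < Y \<omega>} \<le> exp (- t * x) * expectation (\<lambda>\<omega>. exp (t * Y \<omega>))"
proof -
  have "prob {\<omega>\<in>space M. x < Y \<omega>} = expectation (indicator {\<omega>\<in>space M. x < Y \<omega>})"
    by simp
  also have "\<dots> \<le> expectation (\<lambda>\<omega>. exp (- t * x) * exp (t * Y \<omega>))"
  proof (intro integral_mono)
    fix \<omega>
    have "x < Y \<omega> \<Longrightarrow> 1 \<le> exp (- t * x) * exp (t * Y \<omega>)"
      using t by (simp add: exp_add[symmetric] algebra_simps mult_left_mono)
    then show "indicator {\<omega>\<in>space M. x < Y \<omega>} \<omega> \<le> exp (- t * x) * exp (t * Y \<omega>)"
      by (simp add: indicator_def)
  qed (use int in \<open>auto intro!: integrable_real_indicator simp: less_top[symmetric]\<close>)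
  finally show ?thesis by simp
qed

lemma (in prob_space) prob_indep_sum_gt_le:
  fixes X :: "nat \<Rightarrow> 'a \<Rightarrow> real" and I :: "nat set"
  assumes fin: "finite I" and ind: "indep_vars (\<lambda>_. borel) X I"
    and bnd: "\<And>i \<omega>. i \<in> I \<Longrightarrow> \<omega> \<in> space M \<Longrightarrow> \<bar>X i \<omega>\<bar> \<le> B"
    and t: "t \<ge> 0" "t * B \<le> D"
    and mean: "\<And>i. i \<in> I \<Longrightarrow> expectation (X i) = 0"
  shows "prob {\<omega>\<in>space M. x < (\<Sum>i\<in>I. X i \<omega>)}
     \<le> exp (- t * x + t\<^sup>2 * exp D / 2 * (\<Sum>i\<in>I. expectation (\<lambda>\<omega>. (X i \<omega>)\<^sup>2)))"
proof -
  have [measurable]: "X i \<in> borel_measurable M" if "i \<in> I" for i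
    using ind that unfolding indep_vars_def by auto
  note mgf = expectation_exp_le[OF _ bnd t mean]
  have ind_exp: "indep_vars (\<lambda>_. borel) (\<lambda>i \<omega>. exp (t * X i \<omega>)) I"
    by (rule indep_vars_compose2[OF ind]) auto
  have exp_tsum: "exp (t * (\<Sum>i\<in>I. X i \<omega>)) = (\<Prod>i\<in>I. exp (t * X i \<omega>))" for \<omega>
    by (simp add: exp_sum[OF fin] sum_distrib_left)
  have "expectation (\<lambda>\<omega>. exp (t * (\<Sum>i\<in>I. X i \<omega>))) = (\<Prod>i\<in>I. expectation (\<lambda>\<omega>. exp (t * X i \<omega>)))"
    unfolding exp_tsum using mgf(1) by (intro indep_vars_lebesgue_integral[OF fin ind_exp]) auto
  also have "\<dots> \<le> (\<Prod>i\<in>I. exp (t\<^sup>2 * exp D / 2 * expectation (\<lambda>\<omega>. (X i \<omega>)\<^sup>2)))"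
    using mgf(2) by (intro prod_mono) auto
  also have "\<dots> = exp (t\<^sup>2 * exp D / 2 * (\<Sum>i\<in>I. expectation (\<lambda>\<omega>. (X i \<omega>)\<^sup>2)))"
    by (simp add: exp_sum[OF fin] sum_distrib_left)
  finally have moment: "expectation (\<lambda>\<omega>. exp (t * (\<Sum>i\<in>I. X i \<omega>))) \<le> \<dots>" .
  have "integrable M (\<lambda>\<omega>. exp (t * (\<Sum>i\<in>I. X i \<omega>)))"
    unfolding exp_tsum using mgf(1) by (intro indep_vars_integrable[OF fin ind_exp]) auto
  then have "prob {\<omega>\<in>space M. x < (\<Sum>i\<in>I. X i \<omega>)}
      \<le> exp (- t * x) * expectation (\<lambda>\<omega>. exp (t * (\<Sum>i\<in>I. X i \<omega>)))"
    using t by (intro prob_gt_le_exp_moment) auto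
  also have "\<dots> \<le> exp (- t * x) * exp (t\<^sup>2 * exp D / 2 * (\<Sum>i\<in>I. expectation (\<lambda>\<omega>. (X i \<omega>)\<^sup>2)))"
    using moment by simp
  finally show ?thesis by (simp only: exp_add[symmetric])
qed

lemma (in prob_space) centered_truncation:
  fixes Y :: "'a \<Rightarrow> real"
  assumes [measurable]: "Y \<in> borel_measurable M"
    and \<theta>: "\<theta> \<ge> 0" and int2: "integrable M (\<lambda>\<omega>. (Y \<omega>)\<^sup>2)"
  defines "T \<equiv> \<lambda>\<omega>. if \<bar>Y \<omega>\<bar> \<le> \<theta> then Y \<omega> else 0"
  shows "(\<lambda>\<omega>. T \<omega> - expectation T) \<in> borel_measurable M"
    and "\<bar>T \<omega> - expectation T\<bar> \<le> 2 * \<theta>"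
    and "expectation (\<lambda>\<omega>. T \<omega> - expectation T) = 0"
    and "expectation (\<lambda>\<omega>. (T \<omega> - expectation T)\<^sup>2) \<le> expectation (\<lambda>\<omega>. (Y \<omega>)\<^sup>2)"
proof -
  have [measurable]: "T \<in> borel_measurable M" unfolding T_def by measurable
  have T_bnd: "\<bar>T \<omega>\<bar> \<le> \<theta>" for \<omega> unfolding T_def using \<theta> by auto
  have intT: "integrable M T"
    using T_bnd by (intro integrable_const_bound[where B=\<theta>] AE_I2) auto
  have intT2: "integrable M (\<lambda>\<omega>. (T \<omega>)\<^sup>2)"
    using power_mono[OF T_bnd abs_ge_zero, of _ 2]
    by (intro integrable_const_bound[where B="\<theta>\<^sup>2"] AE_I2) auto
  define m where "m = expectation T"
  have "\<bar>m\<bar> \<le> expectation (\<lambda>\<omega>. \<theta>)"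
    unfolding m_def using intT T_bnd
    by (intro order.trans[OF integral_abs_bound] integral_mono) auto
  then have m_bnd: "\<bar>m\<bar> \<le> \<theta>" by (simp add: prob_space)
  show "(\<lambda>\<omega>. T \<omega> - expectation T) \<in> borel_measurable M" by measurable
  show "\<bar>T \<omega> - expectation T\<bar> \<le> 2 * \<theta>"
    using T_bnd[of \<omega>] m_bnd unfolding m_def by linarith
  show "expectation (\<lambda>\<omega>. T \<omega> - expectation T) = 0"
    using intT by (simp add: prob_space)
  have "expectation (\<lambda>\<omega>. (T \<omega> - m)\<^sup>2) = expectation (\<lambda>\<omega>. (T \<omega>)\<^sup>2 - 2 * m * T \<omega> + m\<^sup>2)"
    by (simp add: power2_diff algebra_simps)
  also have "\<dots> = expectation (\<lambda>\<omega>. (T \<omega>)\<^sup>2) - m\<^sup>2"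
    using intT intT2 by (simp add: prob_space m_def power2_eq_square)
  also have "\<dots> \<le> expectation (\<lambda>\<omega>. (T \<omega>)\<^sup>2)" by simp
  also have "\<dots> \<le> expectation (\<lambda>\<omega>. (Y \<omega>)\<^sup>2)"
    by (rule integral_mono[OF intT2 int2]) (simp add: T_def)
  finally show "expectation (\<lambda>\<omega>. (T \<omega> - expectation T)\<^sup>2) \<le> expectation (\<lambda>\<omega>. (Y \<omega>)\<^sup>2)"
    unfolding m_def .
qed

lemma (in prob_space) square_moments_eq_if_distr_eq:
  fixes X Y :: "'a \<Rightarrow> real"
  assumes [measurable]: "X \<in> borel_measurable M" "Y \<in> borel_measurable M"
    and distr: "distr M borel X = distr M borel Y"
  shows "integrable M (\<lambda>\<omega>. (X \<omega>)\<^sup>2) \<longleftrightarrow> integrable M (\<lambda>\<omega>. (Y \<omega>)\<^sup>2)"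
    and "expectation (\<lambda>\<omega>. (X \<omega>)\<^sup>2) = expectation (\<lambda>\<omega>. (Y \<omega>)\<^sup>2)"
  using integrable_distr_eq[of X M borel "\<lambda>x. x\<^sup>2"] integrable_distr_eq[of Y M borel "\<lambda>x. x\<^sup>2"]
    integral_distr[of X M borel "\<lambda>x. x\<^sup>2"] integral_distr[of Y M borel "\<lambda>x. x\<^sup>2"] distr
  by auto

lemma (in prob_space) AE_eventually_frequently_partial_sums_le:
  fixes X :: "nat \<Rightarrow> nat \<Rightarrow> 'a \<Rightarrow> real" and f b :: "nat \<Rightarrow> real"
  assumes meas[measurable]: "\<And>n j. X n j \<in> borel_measurable M"
    and tail: "eventually (\<lambda>n. \<forall>N. prob {\<omega>\<in>space M. x < f n * (\<Sum>j<N. X n j \<omega>)} \<le> b n) sequentially"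
    and summ: "summable b"
  shows "AE \<omega> in M. \<forall>\<^sub>F n in sequentially. \<exists>\<^sub>F N in sequentially. f n * (\<Sum>j<N. X n j \<omega>) \<le> x"
proof -
  obtain n0 where tail_n0: "\<And>n N. n \<ge> n0 \<Longrightarrow> prob {\<omega>\<in>space M. x < f n * (\<Sum>j<N. X n j \<omega>)} \<le> b n"
    using tail unfolding eventually_sequentially by blast
  define C where "C n m = {\<omega>\<in>space M. \<forall>N\<ge>m. x < f n * (\<Sum>j<N. X n j \<omega>)}" for n m
  define A where "A n = (if n \<ge> n0 then (\<Union>m. C n m) else {})" for n
  have C_sets: "C n m \<in> sets M" for n m unfolding C_def by measurable
  have A_sets: "A n \<in> sets M" for n unfolding A_def using C_sets by auto
  have A_bnd: "prob (A n) \<le> b n" if n: "n \<ge> n0" for n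
  proof -
    have "prob (C n m) \<le> b n" for m
    proof (rule order.trans[OF finite_measure_mono tail_n0[OF n, of m]])
      show "C n m \<subseteq> {\<omega>\<in>space M. x < f n * (\<Sum>j<m. X n j \<omega>)}" unfolding C_def by auto
    qed measurable
    moreover have "(\<lambda>m. prob (C n m)) \<longlonglongrightarrow> prob (\<Union>m. C n m)"
      using C_sets by (intro Lim_measure_incseq) (auto simp: C_def incseq_def)
    ultimately show ?thesis unfolding A_def using n by (auto intro: LIMSEQ_le_const2)
  qed
  have "summable (\<lambda>n. prob (A n))"
    using A_bnd by (intro summable_comparison_test[OF _ summ]) auto
  then have "AE \<omega> in M. eventually (\<lambda>n. \<omega> \<in> space M - A n) sequentially"
    using A_sets by (intro borel_cantelli_AE1) (auto simp: emeasure_eq_measure)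
  then show ?thesis
  proof eventually_elim
    case (elim \<omega>)
    from elim eventually_ge_at_top[of n0] show ?case
      by eventually_elim (auto simp: frequently_sequentially A_def C_def not_less)
  qed
qed

lemma (in prob_space) AE_limsup_le_if_summable_tail_probs:
  fixes X :: "nat \<Rightarrow> nat \<Rightarrow> 'a \<Rightarrow> real" and f b :: "nat \<Rightarrow> real"
  assumes "\<And>n j. X n j \<in> borel_measurable M"
    and "eventually (\<lambda>n. \<forall>N. prob {\<omega>\<in>space M. x < f n * (\<Sum>j<N. X n j \<omega>)} \<le> b n) sequentially"
    and "summable b"
  shows "AE \<omega> in M. eventually (\<lambda>n. summable (\<lambda>j. X n j \<omega>)) sequentially \<longrightarrow>
           limsup (\<lambda>n. ereal (f n * (\<Sum>j. X n j \<omega>))) \<le> ereal x"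
  using AE_eventually_frequently_partial_sums_le[OF assms]
proof eventually_elim
  case (elim \<omega>)
  show ?case
  proof
    assume "eventually (\<lambda>n. summable (\<lambda>j. X n j \<omega>)) sequentially"
    with elim have "eventually (\<lambda>n. f n * (\<Sum>j. X n j \<omega>) \<le> x) sequentially"
    proof eventually_elim
      case (elim n)
      show ?case
      proof (rule ccontr)
        assume "\<not> f n * (\<Sum>j. X n j \<omega>) \<le> x"
        then have "x < f n * (\<Sum>j. X n j \<omega>)" by simp
        moreover have "(\<lambda>N. f n * (\<Sum>j<N. X n j \<omega>)) \<longlonglongrightarrow> f n * (\<Sum>j. X n j \<omega>)"
          using elim(2) by (intro tendsto_mult_left summable_LIMSEQ)
        ultimately have "eventually (\<lambda>N. x < f n * (\<Sum>j<N. X n j \<omega>)) sequentially"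
          by (rule order_tendstoD(1)[rotated])
        then have "eventually (\<lambda>N. \<not> f n * (\<Sum>j<N. X n j \<omega>) \<le> x) sequentially"
          by (rule eventually_mono) simp
        with elim(1) show False unfolding frequently_def by blast
      qed
    qed
    then show "limsup (\<lambda>n. ereal (f n * (\<Sum>j. X n j \<omega>))) \<le> ereal x"
      by (intro Limsup_bounded) (auto elim: eventually_mono)
  qed
qed

section \<open>The truncated series\<close>

lemma c_alpha_pos: "\<alpha> > -1/2 \<Longrightarrow> c_alpha \<alpha> > 0"
  using Gamma_real_pos_exp[of "1 + 2 * \<alpha>"] by (auto simp: c_alpha_def)

lemma ln_inverse_s_seq: "ln (1 / s_seq \<gamma> n) = real n powr (1 - \<gamma>)"
  by (simp add: s_seq_def exp_minus divide_inverse)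

lemma ln_ln_inverse_s_seq: "n \<ge> 1 \<Longrightarrow> ln (ln (1 / s_seq \<gamma> n)) = (1 - \<gamma>) * ln (real n)"
  by (simp add: ln_inverse_s_seq ln_powr)

lemma M_fun_ge:
  assumes "0 < s" "s \<le> 1 / 2"
  shows "real (M_fun s) \<ge> 1 / (2 * s)"
proof -
  have "1 / s \<ge> 2" using assms by (simp add: field_simps)
  then have "real (M_fun s) \<ge> 1 / s - 1" unfolding M_fun_def by linarith
  also have "1 / s - 1 \<ge> 1 / (2 * s)" using \<open>1 / s \<ge> 2\<close> by (simp add: field_simps)
  finally show ?thesis .
qed

lemma ln_M_fun_ge:
  assumes "0 < s" "s \<le> 1 / 2"
  shows "ln (real (M_fun s)) \<ge> ln (1 / s) - 1"
proof -
  have "ln (1 / s) - 1 \<le> ln (1 / s) - ln 2" using ln_2_less_1 by simp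
  also have "\<dots> = ln (1 / (2 * s))" using assms by (simp add: ln_div ln_mult)
  also have "\<dots> \<le> ln (real (M_fun s))" using M_fun_ge[OF assms] assms by (intro ln_mono) auto
  finally show ?thesis .
qed

text \<open>Twice the truncation level times (log k)^\<alpha> k^(-1/2-s), made uniform in k by
  k^((1+s)/2) \<le> k^(1/2+s).\<close>

definition series_term_bound :: "real \<Rightarrow> real \<Rightarrow> real \<Rightarrow> real" where
  "series_term_bound \<alpha> \<rho> s = 2 * \<rho> / (ln (1 / s) * sqrt (s powr (1 + 2 * \<alpha>) * ln (ln (1 / s))))"

definition variance_weight :: "real \<Rightarrow> real \<Rightarrow> nat \<Rightarrow> real" where
  "variance_weight \<alpha> s k = ln (real k) powr (2 * \<alpha>) / real k powr (1 + 2 * s)"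

lemma scaled_thr_le:
  fixes \<alpha> \<rho> s :: real and k :: nat
  assumes k: "k \<ge> 1" and \<rho>: "\<rho> \<ge> 0" and s: "s > 0"
    and T: "ln (1 / s) > 0" and L: "ln (ln (1 / s)) > 0"
  shows "ln (real k) powr \<alpha> * thr \<alpha> k \<rho> s / real k powr (1/2 + s)
           \<le> \<rho> / (ln (1 / s) * sqrt (s powr (1 + 2 * \<alpha>) * ln (ln (1 / s))))"
proof -
  define a T R where "a = ln (real k) powr \<alpha>" and "T = ln (1 / s)"
    and "R = sqrt (s powr (1 + 2 * \<alpha>) * ln (ln (1 / s)))"
  define q where "q = real k powr (1/2 + s)"
  have R: "R > 0" and q: "q > 0" unfolding R_def q_def using s L k by auto
  have "sqrt (real k powr (1 + s)) = real k powr ((1 + s) / 2)"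
    using k by (simp add: powr_half_sqrt[symmetric] powr_powr)
  also have "\<dots> \<le> q" unfolding q_def using k s by (intro powr_mono) auto
  finally have sqrt_le: "sqrt (real k powr (1 + s)) \<le> q" .
  have "a * thr \<alpha> k \<rho> s \<le> \<rho> / T * (sqrt (real k powr (1 + s)) / R)"
  proof (cases "a = 0")
    case False
    then show ?thesis
      unfolding thr_def a_def T_def R_def by (simp add: real_sqrt_divide real_sqrt_mult field_simps)
  qed (use \<rho> T R in \<open>simp add: T_def\<close>)
  also have "\<dots> \<le> \<rho> / T * (q / R)"
    using \<rho> T R sqrt_le by (intro mult_left_mono divide_right_mono) (auto simp: T_def)
  finally show ?thesis
    using q unfolding a_def T_def R_def q_def by (simp add: pos_divide_le_eq field_simps)
qed

lemma (in prob_space) measurable_series_term: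
  assumes "\<And>k. k \<ge> 1 \<Longrightarrow> \<eta> k \<in> borel_measurable M"
  shows "(\<lambda>\<omega>. series_term M \<eta> \<alpha> \<rho> s \<omega> j) \<in> borel_measurable M"
proof -
  have [measurable]: "\<eta> (j + M_fun s + 1) \<in> borel_measurable M" using assms by simp
  show ?thesis unfolding series_term_def eta_tilde_def eta_trunc_def Let_def by measurable
qed

lemma (in prob_space) series_term_bound_mean_variance:
  fixes \<eta> :: "nat \<Rightarrow> 'a \<Rightarrow> real" and \<alpha> \<rho> s :: real and j :: nat
  assumes \<eta>: "\<And>k. k \<ge> 1 \<Longrightarrow> \<eta> k \<in> borel_measurable M"
    and \<eta>_sq: "\<And>k. k \<ge> 1 \<Longrightarrow> integrable M (\<lambda>\<omega>. (\<eta> k \<omega>)\<^sup>2)"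
    and \<eta>_var: "\<And>k. k \<ge> 1 \<Longrightarrow> expectation (\<lambda>\<omega>. (\<eta> k \<omega>)\<^sup>2) \<le> 1"
    and \<rho>: "\<rho> \<ge> 0" and s: "s > 0" "1 < ln (1 / s)"
  defines "k \<equiv> j + M_fun s + 1"
  shows "\<bar>series_term M \<eta> \<alpha> \<rho> s \<omega> j\<bar> \<le> series_term_bound \<alpha> \<rho> s"
    and "expectation (\<lambda>\<omega>. series_term M \<eta> \<alpha> \<rho> s \<omega> j) = 0"
    and "expectation (\<lambda>\<omega>. (series_term M \<eta> \<alpha> \<rho> s \<omega> j)\<^sup>2)
           \<le> variance_weight \<alpha> s k"
proof -
  define a q \<theta> where "a = ln (real k) powr \<alpha>" and "q = real k powr (1/2 + s)" and "\<theta> = thr \<alpha> k \<rho> s"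
  define T where "T = eta_trunc \<eta> \<alpha> k \<rho> s"
  have k: "k \<ge> 1" unfolding k_def by simp
  have "ln (1 / s) = - ln s" using s(1) by (simp add: ln_div)
  then have "s \<le> 1" using s ln_less_zero_iff[OF s(1)] by linarith
  have a: "a \<ge> 0" and q: "q > 0" unfolding a_def q_def using k by auto
  have \<theta>: "\<theta> \<ge> 0"
    unfolding \<theta>_def thr_def using \<rho> s \<open>s \<le> 1\<close>
    by (auto intro!: mult_nonneg_nonneg divide_nonneg_nonneg)
  have T_eq: "T = (\<lambda>\<omega>. if \<bar>\<eta> k \<omega>\<bar> \<le> \<theta> then \<eta> k \<omega> else 0)"
    unfolding T_def \<theta>_def eta_trunc_def by simp
  note C = centered_truncation[OF \<eta>[OF k] \<theta> \<eta>_sq[OF k]]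
  have term_eq: "series_term M \<eta> \<alpha> \<rho> s \<omega> j = a / q * (T \<omega> - expectation T)" for \<omega>
    unfolding series_term_def eta_tilde_def Let_def k_def[symmetric] a_def q_def T_def by simp
  have "\<bar>series_term M \<eta> \<alpha> \<rho> s \<omega> j\<bar> = a / q * \<bar>T \<omega> - expectation T\<bar>"
    unfolding term_eq using a q by (simp add: abs_mult)
  also have "\<dots> \<le> a / q * (2 * \<theta>)"
    unfolding T_eq using a q by (intro mult_left_mono[OF C(2)]) simp
  also have "\<dots> = 2 * (a * \<theta> / q)" by simp
  also have "\<dots> \<le> 2 * (\<rho> / (ln (1 / s) * sqrt (s powr (1 + 2 * \<alpha>) * ln (ln (1 / s)))))"
    using scaled_thr_le[OF k \<rho> s(1)] s(2) unfolding a_def \<theta>_def q_def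
    by (intro mult_left_mono) simp_all
  also have "\<dots> = series_term_bound \<alpha> \<rho> s" unfolding series_term_bound_def by simp
  finally show "\<bar>series_term M \<eta> \<alpha> \<rho> s \<omega> j\<bar> \<le> series_term_bound \<alpha> \<rho> s" .
  show "expectation (\<lambda>\<omega>. series_term M \<eta> \<alpha> \<rho> s \<omega> j) = 0"
    unfolding term_eq T_eq using C(3) by simp
  have "expectation (\<lambda>\<omega>. (series_term M \<eta> \<alpha> \<rho> s \<omega> j)\<^sup>2)
      = (a / q)\<^sup>2 * expectation (\<lambda>\<omega>. (T \<omega> - expectation T)\<^sup>2)"
    unfolding term_eq power_mult_distrib by (rule integral_mult_right_zero)
  also have "\<dots> \<le> (a / q)\<^sup>2"
    using C(4) \<eta>_var[OF k] unfolding T_eq by (intro mult_left_le) auto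
  also have "\<dots> = variance_weight \<alpha> s k"
    unfolding a_def q_def variance_weight_def using k
    by (simp add: power_divide power2_eq_square powr_add[symmetric])
  finally show "expectation (\<lambda>\<omega>. (series_term M \<eta> \<alpha> \<rho> s \<omega> j)\<^sup>2)
      \<le> variance_weight \<alpha> s k" .
qed

lemma (in prob_space) indep_series_terms:
  fixes \<eta> :: "nat \<Rightarrow> 'a \<Rightarrow> real"
  assumes ind: "indep_vars (\<lambda>_. borel) \<eta> {1..}"
  shows "indep_vars (\<lambda>_. borel) (\<lambda>j \<omega>. series_term M \<eta> \<alpha> \<rho> s \<omega> j) UNIV"
proof -
  define h where "h k y = ln (real k) powr \<alpha>
      * ((if \<bar>y\<bar> \<le> thr \<alpha> k \<rho> s then y else 0) - expectation (eta_trunc \<eta> \<alpha> k \<rho> s))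
      / real k powr (1/2 + s)" for k y
  have "indep_vars (\<lambda>_. borel) (\<lambda>k \<omega>. h k (\<eta> k \<omega>)) {1..}"
    by (rule indep_vars_compose2[OF ind]) (unfold h_def, measurable)
  then have "indep_vars (\<lambda>_. borel) (\<lambda>k \<omega>. h k (\<eta> k \<omega>)) ((\<lambda>j. j + M_fun s + 1) ` UNIV)"
    by (rule indep_vars_subset) auto
  from indep_vars_reindex[OF _ this] show ?thesis
    by (simp add: inj_on_def series_term_def eta_tilde_def h_def Let_def eta_trunc_def[abs_def])
qed

lemma summable_variance_weight_shift:
  assumes "\<alpha> > -1/2" and "s > 0"
  shows "summable (\<lambda>j. variance_weight \<alpha> s (j + m))"
  using summable_log_powr_div_powr[of "2 * \<alpha>" "2 * s"] assms unfolding variance_weight_def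
  by (subst summable_iff_shift) auto

lemma (in prob_space) AE_summable_series_term:
  fixes \<eta> :: "nat \<Rightarrow> 'a \<Rightarrow> real"
  assumes ind: "indep_vars (\<lambda>_. borel) \<eta> {1..}"
    and \<eta>: "\<And>k. k \<ge> 1 \<Longrightarrow> \<eta> k \<in> borel_measurable M"
    and \<eta>_sq: "\<And>k. k \<ge> 1 \<Longrightarrow> integrable M (\<lambda>\<omega>. (\<eta> k \<omega>)\<^sup>2)"
    and \<eta>_var: "\<And>k. k \<ge> 1 \<Longrightarrow> expectation (\<lambda>\<omega>. (\<eta> k \<omega>)\<^sup>2) \<le> 1"
    and \<alpha>: "\<alpha> > -1/2" and \<rho>: "\<rho> \<ge> 0" and s: "s > 0" "1 < ln (1 / s)"
  shows "AE \<omega> in M. summable (series_term M \<eta> \<alpha> \<rho> s \<omega>)"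
proof -
  note facts = series_term_bound_mean_variance[OF \<eta> \<eta>_sq \<eta>_var \<rho> s]
  have "norm (expectation (\<lambda>\<omega>. (series_term M \<eta> \<alpha> \<rho> s \<omega> j)\<^sup>2))
      \<le> variance_weight \<alpha> s (j + (M_fun s + 1))" for j
    using facts(3)[where j=j] integral_nonneg_AE[of "\<lambda>\<omega>. (series_term M \<eta> \<alpha> \<rho> s \<omega> j)\<^sup>2" M]
    by (simp add: add.assoc)
  then have "summable (\<lambda>j. expectation (\<lambda>\<omega>. (series_term M \<eta> \<alpha> \<rho> s \<omega> j)\<^sup>2))"
    by (intro summable_comparison_test'[OF summable_variance_weight_shift[OF \<alpha> s(1)]])
  from AE_summable_indep[OF indep_series_terms[OF ind] facts(1,2) this] show ?thesis
    by simp
qed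

lemma suminf_variance_weight_le:
  fixes \<alpha> s :: real
  assumes \<alpha>: "\<alpha> > -1/2" and s: "s > 0" "max (2 * \<alpha>) 1 + 1 \<le> ln (1 / s)"
  shows "(\<Sum>j. variance_weight \<alpha> s (j + M_fun s + 1)) \<le> c_alpha \<alpha> / (2 * s powr (1 + 2 * \<alpha>))"
proof -
  have "ln 2 < ln (1 / s)" using ln_2_less_1 s(2) by linarith
  then have s_half: "s < 1 / 2" using s(1) by (simp add: field_simps)
  moreover have "1 < 1 / (2 * s)" using s_half s(1) by (simp add: field_simps)
  ultimately have "real (M_fun s) > 1" using M_fun_ge[of s] s(1) by linarith
  moreover have "2 * \<alpha> \<le> ln (real (M_fun s))" using ln_M_fun_ge[of s] s s_half by linarith
  ultimately have "(\<Sum>j. variance_weight \<alpha> s (j + M_fun s + 1))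
      \<le> Gamma (2 * \<alpha> + 1) / (2 * s) powr (2 * \<alpha> + 1)"
    unfolding variance_weight_def using \<alpha> s(1) by (intro log_powr_series_bound(2)) auto
  also have "\<dots> = c_alpha \<alpha> / (2 * s powr (1 + 2 * \<alpha>))"
    using s(1) by (simp add: c_alpha_def powr_mult powr_add add.commute)
  finally show ?thesis .
qed

lemma tail_parameter_le:
  fixes x \<rho> L c Sa E T :: real
  assumes "x \<ge> 0" "\<rho> \<ge> 0" "L > 0" "c > 0" "Sa > 0" "E \<ge> 1" "T \<ge> 1"
  shows "2 * x * L / E * sqrt (Sa / (c * L)) * (2 * \<rho> / (T * sqrt (Sa * L))) \<le> 4 * x * \<rho> / sqrt c"
proof -
  have "2 * x * L / E * sqrt (Sa / (c * L)) * (2 * \<rho> / (T * sqrt (Sa * L)))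
      = 4 * x * \<rho> / sqrt c / (E * T)"
    using assms by (simp add: real_sqrt_divide real_sqrt_mult field_simps)
  also have "\<dots> \<le> 4 * x * \<rho> / sqrt c / 1"
    using assms mult_mono[of 1 E 1 T] by (intro divide_left_mono) auto
  finally show ?thesis by simp
qed

lemma tail_exponent_le:
  fixes x L c Sa E V :: real
  assumes x: "x > 0" and L: "L > 0" and c: "c > 0" and Sa: "Sa > 0" and E: "E > 0"
    and V: "V \<le> c / (2 * Sa)"
  defines "f \<equiv> sqrt (Sa / (c * L))"
  defines "t \<equiv> 2 * x * L / E * f"
  shows "- t * (x / f) + t\<^sup>2 * E / 2 * V \<le> - (x\<^sup>2 * L / E)"
proof -
  have f: "f > 0" "f\<^sup>2 = Sa / (c * L)" unfolding f_def using Sa c L by simp_all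
  have "t\<^sup>2 * E / 2 * V \<le> t\<^sup>2 * E / 2 * (c / (2 * Sa))"
    using V E by (intro mult_left_mono) auto
  also have "\<dots> = x\<^sup>2 * L / E"
    unfolding t_def using f L E Sa c
    by (simp add: power_mult_distrib power_divide field_simps power2_eq_square)
  finally have "t\<^sup>2 * E / 2 * V \<le> x\<^sup>2 * L / E" .
  moreover have "- t * (x / f) = - (2 * x\<^sup>2 * L / E)"
    unfolding t_def using f by (simp add: power2_eq_square field_simps)
  ultimately show ?thesis by (simp add: field_simps)
qed

lemma (in prob_space) sum_variance_series_term_le:
  fixes \<eta> :: "nat \<Rightarrow> 'a \<Rightarrow> real" and \<alpha> \<rho> s :: real
  assumes \<eta>: "\<And>k. k \<ge> 1 \<Longrightarrow> \<eta> k \<in> borel_measurable M"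
    and \<eta>_sq: "\<And>k. k \<ge> 1 \<Longrightarrow> integrable M (\<lambda>\<omega>. (\<eta> k \<omega>)\<^sup>2)"
    and \<eta>_var: "\<And>k. k \<ge> 1 \<Longrightarrow> expectation (\<lambda>\<omega>. (\<eta> k \<omega>)\<^sup>2) \<le> 1"
    and \<alpha>: "\<alpha> > -1/2" and \<rho>: "\<rho> \<ge> 0" and s: "s > 0" "max (2 * \<alpha>) 1 + 1 \<le> ln (1 / s)"
  shows "(\<Sum>j<N. expectation (\<lambda>\<omega>. (series_term M \<eta> \<alpha> \<rho> s \<omega> j)\<^sup>2))
           \<le> c_alpha \<alpha> / (2 * s powr (1 + 2 * \<alpha>))"
proof -
  have "1 < ln (1 / s)" using s by linarith
  then have "(\<Sum>j<N. expectation (\<lambda>\<omega>. (series_term M \<eta> \<alpha> \<rho> s \<omega> j)\<^sup>2))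
      \<le> (\<Sum>j<N. variance_weight \<alpha> s (j + M_fun s + 1))"
    using \<rho> s by (intro sum_mono series_term_bound_mean_variance(3)[OF \<eta> \<eta>_sq \<eta>_var]) auto
  also have "\<dots> \<le> (\<Sum>j. variance_weight \<alpha> s (j + M_fun s + 1))"
    using summable_variance_weight_shift[OF \<alpha> s(1), of "M_fun s + 1"]
    by (intro sum_le_suminf) (auto simp: add.assoc variance_weight_def)
  also have "\<dots> \<le> c_alpha \<alpha> / (2 * s powr (1 + 2 * \<alpha>))"
    by (rule suminf_variance_weight_le[OF \<alpha> s])
  finally show ?thesis .
qed

lemma (in prob_space) series_partial_sum_tail:
  fixes \<eta> :: "nat \<Rightarrow> 'a \<Rightarrow> real" and \<alpha> \<rho> s x :: real
  assumes ind: "indep_vars (\<lambda>_. borel) \<eta> {1..}"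
    and \<eta>: "\<And>k. k \<ge> 1 \<Longrightarrow> \<eta> k \<in> borel_measurable M"
    and \<eta>_sq: "\<And>k. k \<ge> 1 \<Longrightarrow> integrable M (\<lambda>\<omega>. (\<eta> k \<omega>)\<^sup>2)"
    and \<eta>_var: "\<And>k. k \<ge> 1 \<Longrightarrow> expectation (\<lambda>\<omega>. (\<eta> k \<omega>)\<^sup>2) \<le> 1"
    and \<alpha>: "\<alpha> > -1/2" and \<rho>: "\<rho> \<ge> 0" and x: "x > 0"
    and s: "s > 0" "max (2 * \<alpha>) 1 + 1 \<le> ln (1 / s)"
  shows "prob {\<omega>\<in>space M. x < f_alpha \<alpha> s * (\<Sum>j<N. series_term M \<eta> \<alpha> \<rho> s \<omega> j)}
           \<le> exp (- (x\<^sup>2 * ln (ln (1 / s)) / exp (4 * x * \<rho> * c_alpha \<alpha> powr (-1/2))))"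
proof -
  define c L Sa D where "c = c_alpha \<alpha>" and "L = ln (ln (1 / s))" and "Sa = s powr (1 + 2 * \<alpha>)"
    and "D = 4 * x * \<rho> * c powr (-1/2)"
  define f t where "f = f_alpha \<alpha> s" and "t = 2 * x * L / exp D * f"
  \<comment> \<open>t minimises -t x/f + t^2 e^D V/2 at the variance bound V = c/(2 Sa)\<close>
  define X where "X j \<omega> = series_term M \<eta> \<alpha> \<rho> s \<omega> j" for j \<omega>
  have c: "c > 0" unfolding c_def using c_alpha_pos[OF \<alpha>] .
  have T: "1 < ln (1 / s)" using s by linarith
  have L: "L > 0" unfolding L_def using T by (rule ln_gt_zero)
  have Sa: "Sa > 0" unfolding Sa_def using s by simp
  have D: "D \<ge> 0" unfolding D_def using x \<rho> c by simp
  have f_eq: "f = sqrt (Sa / (c * L))" unfolding f_def f_alpha_def Sa_def c_def L_def ..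
  have f: "f > 0" unfolding f_eq using Sa c L by simp
  note facts = series_term_bound_mean_variance[where \<alpha>=\<alpha>, OF \<eta> \<eta>_sq \<eta>_var \<rho> s(1) T]
  have V: "(\<Sum>j<N. expectation (\<lambda>\<omega>. (X j \<omega>)\<^sup>2)) \<le> c / (2 * Sa)"
    unfolding X_def c_def Sa_def by (rule sum_variance_series_term_le[OF \<eta> \<eta>_sq \<eta>_var \<alpha> \<rho> s])
  have "t * series_term_bound \<alpha> \<rho> s \<le> 4 * x * \<rho> / sqrt c"
    unfolding t_def f_eq series_term_bound_def L_def[symmetric] Sa_def[symmetric]
    using x \<rho> L c Sa T D by (intro tail_parameter_le) auto
  also have "\<dots> = D" unfolding D_def using c by (simp add: powr_minus_divide powr_half_sqrt)
  finally have tB: "t * series_term_bound \<alpha> \<rho> s \<le> D" .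
  have "{\<omega>\<in>space M. x < f * (\<Sum>j<N. X j \<omega>)} = {\<omega>\<in>space M. x / f < (\<Sum>j\<in>{..<N}. X j \<omega>)}"
    using f by (auto simp: pos_divide_less_eq mult.commute)
  also have "prob \<dots> \<le> exp (- t * (x / f) + t\<^sup>2 * exp D / 2 * (\<Sum>j<N. expectation (\<lambda>\<omega>. (X j \<omega>)\<^sup>2)))"
    using indep_vars_subset[OF indep_series_terms[OF ind], of "{..<N}"] facts(1,2) tB f x L
    unfolding X_def by (intro prob_indep_sum_gt_le) (auto simp: t_def)
  also have "\<dots> \<le> exp (- (x\<^sup>2 * L / exp D))"
    using tail_exponent_le[OF x L c Sa exp_gt_zero V] unfolding t_def f_eq by simp
  finally show ?thesis unfolding f_def X_def L_def D_def c_def .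
qed

lemma (in prob_space) AE_summable_series_term_s_seq:
  fixes \<eta> :: "nat \<Rightarrow> 'a \<Rightarrow> real"
  assumes ind: "indep_vars (\<lambda>_. borel) \<eta> {1..}"
    and \<eta>: "\<And>k. k \<ge> 1 \<Longrightarrow> \<eta> k \<in> borel_measurable M"
    and \<eta>_sq: "\<And>k. k \<ge> 1 \<Longrightarrow> integrable M (\<lambda>\<omega>. (\<eta> k \<omega>)\<^sup>2)"
    and \<eta>_var: "\<And>k. k \<ge> 1 \<Longrightarrow> expectation (\<lambda>\<omega>. (\<eta> k \<omega>)\<^sup>2) \<le> 1"
    and \<alpha>: "\<alpha> > -1/2" and \<rho>: "\<rho> \<ge> 0" and \<gamma>: "\<gamma> < 1"
  shows "AE \<omega> in M. \<forall>n\<ge>2. summable (series_term M \<eta> \<alpha> \<rho> (s_seq \<gamma> n) \<omega>)"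
proof -
  have "AE \<omega> in M. summable (series_term M \<eta> \<alpha> \<rho> (s_seq \<gamma> n) \<omega>)" if "n \<ge> 2" for n
    using that \<alpha> \<rho> \<gamma> by (intro AE_summable_series_term[OF ind \<eta> \<eta>_sq \<eta>_var])
      (auto simp: s_seq_def ln_inverse_s_seq[unfolded s_seq_def])
  then show ?thesis unfolding AE_all_countable by (intro allI AE_impI)
qed

lemma (in prob_space) eventually_prob_series_s_seq_gt_le:
  fixes \<eta> :: "nat \<Rightarrow> 'a \<Rightarrow> real"
  assumes ind: "indep_vars (\<lambda>_. borel) \<eta> {1..}"
    and \<eta>: "\<And>k. k \<ge> 1 \<Longrightarrow> \<eta> k \<in> borel_measurable M"
    and \<eta>_sq: "\<And>k. k \<ge> 1 \<Longrightarrow> integrable M (\<lambda>\<omega>. (\<eta> k \<omega>)\<^sup>2)"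
    and \<eta>_var: "\<And>k. k \<ge> 1 \<Longrightarrow> expectation (\<lambda>\<omega>. (\<eta> k \<omega>)\<^sup>2) \<le> 1"
    and \<alpha>: "\<alpha> > -1/2" and \<rho>: "\<rho> \<ge> 0" and x: "x > 0" and \<gamma>: "\<gamma> < 1"
  defines "p \<equiv> x\<^sup>2 * (1 - \<gamma>) / exp (4 * x * \<rho> * c_alpha \<alpha> powr (-1/2))"
  shows "\<forall>\<^sub>F n in sequentially. \<forall>N. prob {\<omega>\<in>space M.
           x < f_alpha \<alpha> (s_seq \<gamma> n) * (\<Sum>j<N. series_term M \<eta> \<alpha> \<rho> (s_seq \<gamma> n) \<omega> j)}
           \<le> real n powr (- p)"
proof -
  have "0 < 1 - \<gamma>" using \<gamma> by simp
  from eventually_ge_at_top[of 1] eventually_le_real_powr[OF this, of "max (2 * \<alpha>) 1 + 1"]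
  show ?thesis
  proof eventually_elim
    case (elim n)
    have "real n powr (- p)
        = exp (- (x\<^sup>2 * ((1 - \<gamma>) * ln (real n)) / exp (4 * x * \<rho> * c_alpha \<alpha> powr (-1/2))))"
      using elim(1) by (simp add: powr_def p_def mult_ac)
    then show ?case
      using series_partial_sum_tail[OF ind \<eta> \<eta>_sq \<eta>_var \<alpha> \<rho> x, of "s_seq \<gamma> n"] elim
      by (simp add: s_seq_def ln_inverse_s_seq[unfolded s_seq_def]
          ln_ln_inverse_s_seq[unfolded s_seq_def])
  qed
qed

theorem lemma5p4:
  fixes M :: "'a measure" and \<eta> :: "nat \<Rightarrow> 'a \<Rightarrow> real" and \<alpha> \<gamma> \<rho> :: real
  assumes "prob_space M"
    and "\<And>k. k \<ge> 1 \<Longrightarrow> \<eta> k \<in> borel_measurable M"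
    and "prob_space.indep_vars M (\<lambda>_. borel) \<eta> {1..}"
    and "\<And>k. k \<ge> 1 \<Longrightarrow> distr M borel (\<eta> k) = distr M borel (\<eta> 1)"
    and "integrable M (\<eta> 1)" and "integral\<^sup>L M (\<eta> 1) = 0"
    and "integrable M (\<lambda>\<omega>. (\<eta> 1 \<omega>)\<^sup>2)" and "integral\<^sup>L M (\<lambda>\<omega>. (\<eta> 1 \<omega>)\<^sup>2) = 1"
    and "\<alpha> > -1/2"
    and "0 < \<gamma>" and "\<gamma> < (sqrt 5 - 1) / 2"
    and "\<rho> > 0"
    and "(1 - \<gamma>) * (1 + \<gamma>)\<^sup>2
           * (2 - exp (4 * (1 + \<gamma>) * \<rho> * c_alpha \<alpha> powr (-1/2))) > 1"
  shows "AE \<omega> in M.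
           (\<forall>n\<ge>2. summable (series_term M \<eta> \<alpha> \<rho> (s_seq \<gamma> n) \<omega>)) \<and>
           limsup (\<lambda>n. ereal (f_alpha \<alpha> (s_seq \<gamma> n)
                 * suminf (series_term M \<eta> \<alpha> \<rho> (s_seq \<gamma> n) \<omega>))) \<le> ereal (1 + \<gamma>)"
proof -
  interpret prob_space M by fact
  note \<eta> = assms(2) and ind = assms(3)
  have \<eta>_sq: "integrable M (\<lambda>\<omega>. (\<eta> k \<omega>)\<^sup>2)" and \<eta>_var: "expectation (\<lambda>\<omega>. (\<eta> k \<omega>)\<^sup>2) \<le> 1"
    if "k \<ge> 1" for k
    using square_moments_eq_if_distr_eq[OF \<eta>[OF that] \<eta>[of 1] assms(4)[OF that]] assms(7,8)
    by simp_all
  have "sqrt 5 < 3" by (rule real_less_lsqrt) auto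
  then have \<gamma>: "0 < \<gamma>" "\<gamma> < 1" using assms(10,11) by auto
  define E where "E = exp (4 * (1 + \<gamma>) * \<rho> * c_alpha \<alpha> powr (-1/2))"
  txt \<open>The condition on \<rho> is used only through \<open>E < (1 - \<gamma>)(1 + \<gamma>)\<^sup>2\<close> (as \<open>E (2 - E) \<le> 1\<close>),
    i.e.\ through the summability of the tail bounds \<open>n powr -p\<close>.\<close>
  have "(1 - \<gamma>) * (1 + \<gamma>)\<^sup>2 > 0" using \<gamma> by simp
  with assms(13) have "E < (1 - \<gamma>) * (1 + \<gamma>)\<^sup>2"
    unfolding E_def by (rule less_if_mult_two_minus_gt_one)
  then have p: "(1 + \<gamma>)\<^sup>2 * (1 - \<gamma>) / E > 1"
    unfolding E_def by (subst less_divide_eq_1_pos) (simp_all add: mult.commute)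
  have "AE \<omega> in M. eventually (\<lambda>n. summable (series_term M \<eta> \<alpha> \<rho> (s_seq \<gamma> n) \<omega>)) sequentially \<longrightarrow>
      limsup (\<lambda>n. ereal (f_alpha \<alpha> (s_seq \<gamma> n) * suminf (series_term M \<eta> \<alpha> \<rho> (s_seq \<gamma> n) \<omega>)))
        \<le> ereal (1 + \<gamma>)"
    using AE_limsup_le_if_summable_tail_probs[OF measurable_series_term[OF \<eta>]
        eventually_prob_series_s_seq_gt_le[OF ind \<eta> \<eta>_sq \<eta>_var assms(9) _ _ \<gamma>(2)]] p assms(12) \<gamma>
    by (simp add: summable_real_powr_iff E_def)
  moreover have "AE \<omega> in M. \<forall>n\<ge>2. summable (series_term M \<eta> \<alpha> \<rho> (s_seq \<gamma> n) \<omega>)"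
    using assms(9,12) \<gamma> by (intro AE_summable_series_term_s_seq[OF ind \<eta> \<eta>_sq \<eta>_var]) auto
  ultimately show ?thesis by eventually_elim (auto simp: eventually_sequentially)
qed

end
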